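(* For $A\in\mathrm{SL}(2,\mathbb R)$ the following are equivalent: (1) $A\Lambda_q$ contains a vertical vector (a nonzero vector of the form $(0,y)^T$); (2) there exists $s_0>0$ with $h_{s_0}A\Lambda_q=A\Lambda_q$; (3) there exists $\tau_0>0$ with $A\Lambda_q\cap S_{\tau_0}=\emptyset$. Moreover, if $A\Lambda_q$ contains a vertical vector of length $a>0$, then the smallest $s_0>0$ with $h_{s_0}A\Lambda_q=A\Lambda_q$ is $\lambda_qa^2$.
   Context: Fix an integer $q\ge3$, let $\lambda_q=2\cos(\pi/q)$, and let $G_q\subset \mathrm{SL}(2,\mathbb R)$ be the Hecke triangle group generated by $S=\begin{pmatrix}0&-1\\1&0\end{pmatrix}$ and $T_q=\begin{pmatrix}1&\lambda_q\\0&1\end{pmatrix}$, acting linearly on $\mathbb R^2$. Set $\Lambda_q=G_q(1,0)^T$ and $A\Lambda_q=\{A\mathbf v:\mathbf v\in\Lambda_q\}$. $h_s=\begin{pmatrix}1&0\\-s&1\end{pmatrix}$ for $s\in\mathbb R$; for $\tau>0$, $S_\tau=\{(x,y)^T:0<x\le\tau\}$. *)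

theory Defs
  imports "HOL-Analysis.Analysis"
begin

definition mat2 :: "real \<Rightarrow> real \<Rightarrow> real \<Rightarrow> real \<Rightarrow> real^2^2" where
  "mat2 a b c d = vector [vector [a, b], vector [c, d]]"

definition vec2 :: "real \<Rightarrow> real \<Rightarrow> real^2" where
  "vec2 x y = vector [x, y]"

definition lambda_q :: "nat \<Rightarrow> real" where
  "lambda_q q = 2 * cos (pi / real q)"

definition S_mat :: "real^2^2" where
  "S_mat = mat2 0 (-1) 1 0"

definition T_mat :: "nat \<Rightarrow> real^2^2" where
  "T_mat q = mat2 1 (lambda_q q) 0 1"

definition h_mat :: "real \<Rightarrow> real^2^2" where
  "h_mat s = mat2 1 0 (-s) 1"

inductive_set hecke_group :: "nat \<Rightarrow> (real^2^2) set" for q :: nat where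
  hg_id: "mat 1 \<in> hecke_group q"
| hg_S: "g \<in> hecke_group q \<Longrightarrow> S_mat ** g \<in> hecke_group q"
| hg_Sinv: "g \<in> hecke_group q \<Longrightarrow> mat2 0 1 (-1) 0 ** g \<in> hecke_group q"
| hg_T: "g \<in> hecke_group q \<Longrightarrow> T_mat q ** g \<in> hecke_group q"
| hg_Tinv: "g \<in> hecke_group q \<Longrightarrow> mat2 1 (- lambda_q q) 0 1 ** g \<in> hecke_group q"

definition Lambda_q :: "nat \<Rightarrow> (real^2) set" where
  "Lambda_q q = {g *v vec2 1 0 | g. g \<in> hecke_group q}"

definition mat_image :: "real^2^2 \<Rightarrow> (real^2) set \<Rightarrow> (real^2) set" where
  "mat_image A L = (\<lambda>v. A *v v) ` L"

definition strip :: "real \<Rightarrow> (real^2) set" where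
  "strip \<tau> = {v. 0 < v$1 \<and> v$1 \<le> \<tau>}"

end

theory Submission
  imports Defs
begin

text \<open>
  Put U = S T_q, so that U^q = -1 and the entries of the powers of U are the numbers
  s_n = sin (n pi/q) / sin (pi/q). For 0 <= n <= q each s_n is 0 or at least 1, and this property
  is preserved by sums and products. Closing e_1, e_2 under the nonnegative matrices -S U^k
  (1 <= k < q) and then applying the powers of U and their negatives therefore gives a set that
  contains Lambda_q and in which every second coordinate is 0 or at least 1 in absolute value.
  Applied to the vector g^-1 h e_1, this says that any two vectors of A Lambda_q span a
  parallelogram of area 0 or at least 1.

  If B e_1 = (0, a) for some B in A G_q, then h_(lambda_q a^2) B = B T_q, so h_(lambda_q a^2)
  stabilises A Lambda_q. If h_s stabilises A Lambda_q, the area s p_1^2 spanned by p and h_s p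
  rules out a small positive p_1. Without vertical vectors, right multiplication by T_q^k S runs
  a Euclidean algorithm that shrinks the first coordinate by the factor lambda_q/2 < 1 and hence
  reaches every strip. Finally, with w = B S e_1 and b the (1,2) entry of B (so a b = -1), the
  areas spanned by w, h_s w and by h_s w, B T_q S e_1 are -s b^2 and s b^2 - lambda_q; for
  0 < s < lambda_q a^2 they cannot both be 0 or at least 1 in absolute value.
\<close>

lemma vec2_nth [simp]: "vec2 x y $ 1 = x" "vec2 x y $ 2 = y"
  by (simp_all add: vec2_def)

lemma mat2_nth [simp]:
  "mat2 a b c d $ 1 $ 1 = a" "mat2 a b c d $ 1 $ 2 = b"
  "mat2 a b c d $ 2 $ 1 = c" "mat2 a b c d $ 2 $ 2 = d"
  by (simp_all add: mat2_def)

lemma vec2_eta: "v = vec2 (v$1) (v$2)"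
  by (simp add: vec_eq_iff forall_2)

lemma uminus_vec2: "- vec2 x y = vec2 (-x) (-y)"
  by (simp add: vec_eq_iff forall_2)

lemma mat2_eta: "M = mat2 (M$1$1) (M$1$2) (M$2$1) (M$2$2)"
  by (simp add: vec_eq_iff forall_2)

lemma mat_1_eq_mat2: "(mat 1 :: real^2^2) = mat2 1 0 0 1"
  by (simp add: vec_eq_iff forall_2 mat_def)

lemma mat2_mult_mat2:
  "mat2 a b c d ** mat2 a' b' c' d' = mat2 (a*a'+b*c') (a*b'+b*d') (c*a'+d*c') (c*b'+d*d')"
  by (simp add: vec_eq_iff forall_2 matrix_matrix_mult_def sum_2)

lemma mat2_mult_vec2: "mat2 a b c d *v vec2 x y = vec2 (a*x+b*y) (c*x+d*y)"
  by (simp add: vec_eq_iff forall_2 matrix_vector_mult_def sum_2)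

lemma det_mat2: "det (mat2 a b c d) = a*d - b*c"
  by (simp add: det_2)

lemma matrix_vector_mult_e1 [simp]:
  "((M::real^2^2) *v vec2 1 0)$1 = M$1$1" "(M *v vec2 1 0)$2 = M$2$1"
  by (simp_all add: matrix_vector_mult_def sum_2)

lemma matrix_mult_mat2_nth:
  "(M ** mat2 a b c d)$1$1 = M$1$1*a + M$1$2*c" "(M ** mat2 a b c d)$2$1 = M$2$1*a + M$2$2*c"
  by (simp_all add: matrix_matrix_mult_def sum_2)

lemma h_mat_mult_vec: "h_mat s *v p = vec2 (p$1) (p$2 - s * p$1)"
  by (subst vec2_eta[of p]) (simp add: h_mat_def mat2_mult_vec2)

definition adj2 :: "real^2^2 \<Rightarrow> real^2^2" where
  "adj2 M = mat2 (M$2$2) (-(M$1$2)) (-(M$2$1)) (M$1$1)"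

lemma adj2_mult: "adj2 (M ** N) = adj2 N ** adj2 M"
  by (simp add: adj2_def vec_eq_iff forall_2 matrix_matrix_mult_def sum_2 algebra_simps)

lemma adj2_inverse:
  "det M = 1 \<Longrightarrow> adj2 M ** M = mat 1" "det M = 1 \<Longrightarrow> M ** adj2 M = mat 1"
  by (simp_all add: det_2 adj2_def vec_eq_iff forall_2 matrix_matrix_mult_def sum_2 mat_def
      algebra_simps)

definition cross2 :: "real^2 \<Rightarrow> real^2 \<Rightarrow> real" where
  "cross2 v w = v$1 * w$2 - v$2 * w$1"

lemma cross2_matrix_vector_mult: "cross2 (A *v v) (A *v w) = det A * cross2 v w"
  by (simp add: cross2_def det_2 matrix_vector_mult_def sum_2 algebra_simps)

lemma cross2_h_mat: "cross2 p (h_mat s *v p) = - (s * (p$1)\<^sup>2)"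
  by (simp add: cross2_def h_mat_mult_vec power2_eq_square algebra_simps)

section \<open>The numbers \<open>sin (n\<pi>/q) / sin (\<pi>/q)\<close>\<close>

definition hecke_sin :: "nat \<Rightarrow> int \<Rightarrow> real" where
  "hecke_sin q n = sin (real_of_int n * pi / real q) / sin (pi / real q)"

lemma sin_pi_div_pos: "2 \<le> q \<Longrightarrow> 0 < sin (pi / real q)"
  by (rule sin_gt_zero) (auto simp: field_simps)

lemma hecke_sin_0 [simp]: "hecke_sin q 0 = 0"
  by (simp add: hecke_sin_def)

lemma hecke_sin_1 [simp]: "2 \<le> q \<Longrightarrow> hecke_sin q 1 = 1"
  using sin_pi_div_pos[of q] by (simp add: hecke_sin_def)

lemma hecke_sin_uminus: "hecke_sin q (-n) = - hecke_sin q n"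
  by (simp add: hecke_sin_def)

lemma hecke_sin_recurrence:
  "hecke_sin q (n+1) + hecke_sin q (n-1) = lambda_q q * hecke_sin q n"
proof -
  define t where "t = pi / real q"
  define x where "x = real_of_int n * pi / real q"
  have plus: "real_of_int (n+1) * pi / real q = x + t"
    by (simp add: x_def t_def add_divide_distrib distrib_right)
  have minus: "real_of_int (n-1) * pi / real q = x - t"
    by (simp add: x_def t_def diff_divide_distrib left_diff_distrib)
  have "sin (x+t) + sin (x-t) = 2 * cos t * sin x"
    by (simp add: sin_add sin_diff)
  then show ?thesis
    unfolding hecke_sin_def lambda_q_def plus minus
    by (simp add: t_def x_def add_divide_distrib[symmetric])
qed

lemma hecke_sin_add_q: "0 < q \<Longrightarrow> hecke_sin q (n + int q) = - hecke_sin q n"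
proof -
  assume "0 < q"
  then have "real_of_int (n + int q) * pi / real q = real_of_int n * pi / real q + pi"
    by (simp add: field_simps)
  then show ?thesis by (simp add: hecke_sin_def sin_periodic_pi)
qed

lemma hecke_sin_ge_1:
  assumes q: "2 \<le> q" and k: "1 \<le> k" "k \<le> int q - 1"
  shows "1 \<le> hecke_sin q k"
proof -
  define t where "t = pi / real q"
  define x where "x = real_of_int k * pi / real q"
  have t: "0 < t" "t \<le> pi/2" using q by (auto simp: t_def field_simps)
  have "t \<le> x" using k by (simp add: x_def t_def field_simps)
  moreover have "x \<le> pi - t"
  proof -
    have "real_of_int k * pi \<le> (real q - 1) * pi" using k by (simp add: mult_right_mono)
    then show ?thesis using q by (simp add: x_def t_def field_simps)
  qed
  ultimately have "sin t \<le> sin x"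
    using t sin_mono_le_eq[of t x] sin_mono_le_eq[of t "pi - x"] by (cases "x \<le> pi/2") auto
  then show ?thesis using sin_pi_div_pos[OF q] by (simp add: hecke_sin_def t_def x_def)
qed

lemma lambda_q_pos: "3 \<le> q \<Longrightarrow> 0 < lambda_q q"
  unfolding lambda_q_def by (rule mult_pos_pos, simp, rule cos_gt_zero) (auto simp: field_simps)

lemma lambda_q_less_2: "1 \<le> q \<Longrightarrow> lambda_q q < 2"
proof -
  assume "1 \<le> q"
  then have "cos (pi / real q) < cos 0"
    by (subst cos_mono_less_eq) (auto simp: field_simps)
  then show ?thesis by (simp add: lambda_q_def)
qed

definition zero_or_ge1 :: "real \<Rightarrow> bool" where
  "zero_or_ge1 x \<longleftrightarrow> x = 0 \<or> 1 \<le> x"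

lemma zero_or_ge1_add_mult:
  assumes "zero_or_ge1 a" "zero_or_ge1 b" "zero_or_ge1 c" "zero_or_ge1 d"
  shows "zero_or_ge1 (a * b + c * d)"
proof -
  have prod: "zero_or_ge1 (x * y)" if "zero_or_ge1 x" "zero_or_ge1 y" for x y :: real
    using that mult_mono[of 1 x 1 y] by (auto simp: zero_or_ge1_def)
  show ?thesis using prod[of a b] prod[of c d] assms by (auto simp: zero_or_ge1_def)
qed

lemma hecke_sin_zero_or_ge1: "2 \<le> q \<Longrightarrow> 0 \<le> k \<Longrightarrow> k \<le> int q \<Longrightarrow> zero_or_ge1 (hecke_sin q k)"
  using hecke_sin_ge_1[of q k] hecke_sin_add_q[of q 0]
  by (cases "k = 0 \<or> k = int q") (auto simp: zero_or_ge1_def)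

section \<open>A set of vectors containing \<open>\<Lambda>\<^sub>q\<close>\<close>

text \<open>\<open>U_pow q j w\<close> is \<open>U\<^sup>j w\<close> for \<open>U = S T\<^sub>q\<close>; \<open>cone_map q k\<close> is \<open>-S U\<^sup>k\<close>.\<close>

definition U_pow :: "nat \<Rightarrow> int \<Rightarrow> real^2 \<Rightarrow> real^2" where
  "U_pow q j w = vec2 (- hecke_sin q (j-1) * w$1 - hecke_sin q j * w$2)
                      (hecke_sin q j * w$1 + hecke_sin q (j+1) * w$2)"

definition cone_map :: "nat \<Rightarrow> int \<Rightarrow> real^2 \<Rightarrow> real^2" where
  "cone_map q k w = vec2 (hecke_sin q k * w$1 + hecke_sin q (k+1) * w$2)
                         (hecke_sin q (k-1) * w$1 + hecke_sin q k * w$2)"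

inductive_set cone_set :: "nat \<Rightarrow> (real^2) set" for q where
  cone_e1: "vec2 1 0 \<in> cone_set q"
| cone_e2: "vec2 0 1 \<in> cone_set q"
| cone_step: "w \<in> cone_set q \<Longrightarrow> 1 \<le> k \<Longrightarrow> k \<le> int q - 1 \<Longrightarrow> cone_map q k w \<in> cone_set q"

lemma cone_set_zero_or_ge1:
  assumes q: "2 \<le> q"
  shows "w \<in> cone_set q \<Longrightarrow> zero_or_ge1 (w$1) \<and> zero_or_ge1 (w$2)"
proof (induction rule: cone_set.induct)
  case (cone_step w k)
  then show ?case
    using hecke_sin_zero_or_ge1[OF q, of k] hecke_sin_zero_or_ge1[OF q, of "k+1"]
      hecke_sin_zero_or_ge1[OF q, of "k-1"]
    by (auto simp: cone_map_def intro: zero_or_ge1_add_mult)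
qed (simp_all add: zero_or_ge1_def)

definition rotated_cones :: "nat \<Rightarrow> (real^2) set" where
  "rotated_cones q = {v. \<exists>w\<in>cone_set q. \<exists>j. 0 \<le> j \<and> j < int q \<and> (v = U_pow q j w \<or> v = - U_pow q j w)}"

lemma rotated_cones_second_coord:
  assumes q: "2 \<le> q" and v: "v \<in> rotated_cones q"
  shows "v$2 = 0 \<or> 1 \<le> \<bar>v$2\<bar>"
proof -
  obtain w j where w: "w \<in> cone_set q" and j: "0 \<le> j" "j < int q"
    and v: "v = U_pow q j w \<or> v = - U_pow q j w"
    using v by (auto simp: rotated_cones_def)
  have "zero_or_ge1 (hecke_sin q j * w$1 + hecke_sin q (j+1) * w$2)"
    using cone_set_zero_or_ge1[OF q w] hecke_sin_zero_or_ge1[OF q] j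
    by (intro zero_or_ge1_add_mult) auto
  then show ?thesis using v by (auto simp: U_pow_def zero_or_ge1_def)
qed

definition U_map :: "nat \<Rightarrow> real^2 \<Rightarrow> real^2" where
  "U_map q v = vec2 (- v$2) (v$1 + lambda_q q * v$2)"

definition U_inv_map :: "nat \<Rightarrow> real^2 \<Rightarrow> real^2" where
  "U_inv_map q v = vec2 (lambda_q q * v$1 + v$2) (- v$1)"

definition S_map :: "real^2 \<Rightarrow> real^2" where
  "S_map v = vec2 (- v$2) (v$1)"

lemma U_pow_0: "2 \<le> q \<Longrightarrow> U_pow q 0 w = w"
  by (simp add: U_pow_def hecke_sin_uminus vec_eq_iff forall_2)

lemma U_pow_add_q: "0 < q \<Longrightarrow> U_pow q (j + int q) w = - U_pow q j w"
  using hecke_sin_add_q[of q "j-1"] hecke_sin_add_q[of q j] hecke_sin_add_q[of q "j+1"]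
  by (simp add: U_pow_def vec_eq_iff forall_2 algebra_simps)

lemma U_map_U_pow: "U_map q (U_pow q j w) = U_pow q (j+1) w"
  using hecke_sin_recurrence[of q j] hecke_sin_recurrence[of q "j+1"]
  by (simp add: U_map_def U_pow_def vec_eq_iff forall_2) algebra

lemma U_inv_map_U_pow: "U_inv_map q (U_pow q j w) = U_pow q (j-1) w"
  using hecke_sin_recurrence[of q j] hecke_sin_recurrence[of q "j-1"]
  by (simp add: U_inv_map_def U_pow_def vec_eq_iff forall_2) algebra

lemma S_map_U_pow: "2 \<le> q \<Longrightarrow> S_map (U_pow q j w) = - U_pow q 0 (cone_map q j w)"
  by (simp add: U_pow_0 S_map_def U_pow_def cone_map_def hecke_sin_uminus vec_eq_iff forall_2)

lemma S_map_cone_map: "S_map (cone_map q k w) = U_pow q k w"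
  by (simp add: S_map_def U_pow_def cone_map_def)

lemma U_map_uminus: "U_map q (- v) = - U_map q v"
  and U_inv_map_uminus: "U_inv_map q (- v) = - U_inv_map q v"
  and S_map_uminus: "S_map (- v) = - S_map v"
  by (simp_all add: U_map_def U_inv_map_def S_map_def vec_eq_iff forall_2)

lemma rotated_cones_uminus: "v \<in> rotated_cones q \<Longrightarrow> - v \<in> rotated_cones q"
  unfolding rotated_cones_def by force

lemma U_pow_in_rotated_cones: "w \<in> cone_set q \<Longrightarrow> 0 \<le> j \<Longrightarrow> j < int q \<Longrightarrow> U_pow q j w \<in> rotated_cones q"
  unfolding rotated_cones_def by blast

lemma rotated_cones_induct [consumes 1, case_names U_pow]:
  assumes "v \<in> rotated_cones q"
    and "\<And>w j. w \<in> cone_set q \<Longrightarrow> 0 \<le> j \<Longrightarrow> j < int q \<Longrightarrow> P (U_pow q j w)"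
    and "\<And>v. P v \<Longrightarrow> P (- v)"
  shows "P v"
  using assms unfolding rotated_cones_def by blast

lemma rotated_cones_U_map:
  assumes q: "2 \<le> q" and v: "v \<in> rotated_cones q"
  shows "U_map q v \<in> rotated_cones q"
  using v
proof (induction rule: rotated_cones_induct)
  case (U_pow w j)
  show ?case
  proof (cases "j + 1 < int q")
    case True
    then show ?thesis using U_pow U_map_U_pow U_pow_in_rotated_cones by simp
  next
    case False
    then have "j + 1 = int q" using U_pow by simp
    then have "U_map q (U_pow q j w) = - U_pow q 0 w"
      using U_pow_add_q[of q 0 w] q by (simp add: U_map_U_pow)
    then show ?thesis using q U_pow rotated_cones_uminus U_pow_in_rotated_cones by simp
  qed
qed (simp add: U_map_uminus rotated_cones_uminus)

lemma rotated_cones_U_inv_map: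
  assumes q: "2 \<le> q" and v: "v \<in> rotated_cones q"
  shows "U_inv_map q v \<in> rotated_cones q"
  using v
proof (induction rule: rotated_cones_induct)
  case (U_pow w j)
  show ?case
  proof (cases "1 \<le> j")
    case True
    then show ?thesis using U_pow U_inv_map_U_pow U_pow_in_rotated_cones by simp
  next
    case False
    then have "j - 1 = -1" using U_pow by simp
    then have "U_inv_map q (U_pow q j w) = - U_pow q (int q - 1) w"
      using U_pow_add_q[of q "-1" w] q by (simp add: U_inv_map_U_pow)
    then show ?thesis using q U_pow rotated_cones_uminus U_pow_in_rotated_cones by simp
  qed
qed (simp add: U_inv_map_uminus rotated_cones_uminus)

lemma rotated_cones_S_map:
  assumes q: "2 \<le> q" and v: "v \<in> rotated_cones q"
  shows "S_map v \<in> rotated_cones q"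
  using v
proof (induction rule: rotated_cones_induct)
  case (U_pow w j)
  show ?case
  proof (cases "j = 0")
    case False
    then have "cone_map q j w \<in> cone_set q" using U_pow by (auto intro: cone_step)
    then show ?thesis
      using q S_map_U_pow[OF q] rotated_cones_uminus U_pow_in_rotated_cones by simp
  next
    case True
    have "S_map w \<in> rotated_cones q" using \<open>w \<in> cone_set q\<close>
    proof cases
      case cone_e1
      then show ?thesis
        using q U_pow_0[OF q] U_pow_in_rotated_cones[OF cone_e2, of 0 q] by (simp add: S_map_def)
    next
      case cone_e2
      then show ?thesis
        using q U_pow_0[OF q] U_pow_in_rotated_cones[OF cone_e1, of 0 q] rotated_cones_uminus
        by (fastforce simp: S_map_def uminus_vec2)
    qed (auto simp: S_map_cone_map intro: U_pow_in_rotated_cones)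
    then show ?thesis using True U_pow_0[OF q] by simp
  qed
qed (simp add: S_map_uminus rotated_cones_uminus)

section \<open>Discreteness of \<open>A\<Lambda>\<^sub>q\<close>\<close>

lemma hecke_group_generators:
  "S_mat \<in> hecke_group q" "mat2 0 1 (-1) 0 \<in> hecke_group q"
  "T_mat q \<in> hecke_group q" "mat2 1 (- lambda_q q) 0 1 \<in> hecke_group q"
  using hecke_group.intros(2-5)[OF hecke_group.hg_id, of q] by simp_all

lemma hecke_group_mult: "g \<in> hecke_group q \<Longrightarrow> h \<in> hecke_group q \<Longrightarrow> g ** h \<in> hecke_group q"
  by (induction rule: hecke_group.induct)
     (auto simp: matrix_mul_assoc[symmetric] intro: hecke_group.intros)

lemma hecke_group_det: "g \<in> hecke_group q \<Longrightarrow> det g = 1"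
  by (induction rule: hecke_group.induct) (simp_all add: det_mul S_mat_def T_mat_def det_mat2)

lemma adj2_generators:
  "adj2 S_mat = mat2 0 1 (-1) 0" "adj2 (mat2 0 1 (-1) 0) = S_mat"
  "adj2 (T_mat q) = mat2 1 (- lambda_q q) 0 1" "adj2 (mat2 1 (- lambda_q q) 0 1) = T_mat q"
  by (simp_all add: adj2_def S_mat_def T_mat_def)

lemma hecke_group_adj2: "g \<in> hecke_group q \<Longrightarrow> adj2 g \<in> hecke_group q"
proof (induction rule: hecke_group.induct)
  case hg_id
  show ?case by (simp add: adj2_def mat_1_eq_mat2 hecke_group.hg_id[unfolded mat_1_eq_mat2])
qed (simp_all add: adj2_mult adj2_generators hecke_group_generators hecke_group_mult)

definition hecke_translation :: "nat \<Rightarrow> int \<Rightarrow> real^2^2" where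
  "hecke_translation q k = mat2 1 (of_int k * lambda_q q) 0 1"

lemma hecke_translation_mem: "hecke_translation q k \<in> hecke_group q"
proof -
  have "hecke_translation q (int n) \<in> hecke_group q \<and> hecke_translation q (- int n) \<in> hecke_group q"
    for n
  proof (induction n)
    case 0
    then show ?case using hecke_group.hg_id[of q] by (simp add: hecke_translation_def mat_1_eq_mat2)
  next
    case (Suc n)
    have "hecke_translation q (int (Suc n)) = T_mat q ** hecke_translation q (int n)"
      "hecke_translation q (- int (Suc n)) = mat2 1 (- lambda_q q) 0 1 ** hecke_translation q (- int n)"
      by (simp_all add: hecke_translation_def T_mat_def mat2_mult_mat2 algebra_simps)
    then show ?case using Suc hecke_group.intros by metis
  qed
  from this[of "nat k"] this[of "nat (- k)"] show ?thesis by (cases "0 \<le> k") auto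
qed

lemma S_mat_mult_vec: "S_mat *v v = S_map v"
  and S_inv_mult_vec: "mat2 0 1 (-1) 0 *v v = - S_map v"
  and T_mat_mult_vec: "T_mat q *v v = - S_map (U_map q v)"
  and T_inv_mult_vec: "mat2 1 (- lambda_q q) 0 1 *v v = U_inv_map q (S_map v)"
  by (subst vec2_eta[of v],
      simp add: S_mat_def T_mat_def mat2_mult_vec2 S_map_def U_map_def U_inv_map_def uminus_vec2
      add.commute)+

lemma hecke_orbit_subset_rotated_cones:
  assumes q: "2 \<le> q"
  shows "g \<in> hecke_group q \<Longrightarrow> g *v vec2 1 0 \<in> rotated_cones q"
proof (induction rule: hecke_group.induct)
  case hg_id
  show ?case using U_pow_in_rotated_cones[OF cone_e1, of 0 q] U_pow_0[OF q] q by simp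
qed (simp_all add: matrix_vector_mul_assoc[symmetric] S_mat_mult_vec S_inv_mult_vec T_mat_mult_vec
    T_inv_mult_vec rotated_cones_S_map[OF q] rotated_cones_U_map[OF q] rotated_cones_U_inv_map[OF q]
    rotated_cones_uminus)

text \<open>Since \<open>adj2 g = g\<^sup>-\<^sup>1\<close> lies in the group, the area spanned by \<open>g e\<^sub>1\<close> and \<open>h e\<^sub>1\<close> is the
  second coordinate of \<open>g\<^sup>-\<^sup>1 h e\<^sub>1\<close>.\<close>

lemma hecke_orbit_cross2:
  assumes q: "2 \<le> q" and g: "g \<in> hecke_group q" and h: "h \<in> hecke_group q"
  shows "cross2 (g *v vec2 1 0) (h *v vec2 1 0) = 0 \<or> 1 \<le> \<bar>cross2 (g *v vec2 1 0) (h *v vec2 1 0)\<bar>"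
proof -
  have "cross2 (g *v vec2 1 0) (h *v vec2 1 0) = ((adj2 g ** h) *v vec2 1 0)$2"
    by (simp add: cross2_def adj2_def matrix_matrix_mult_def matrix_vector_mult_def sum_2
        algebra_simps)
  moreover have "adj2 g ** h \<in> hecke_group q"
    using hecke_group_mult hecke_group_adj2 g h by blast
  ultimately show ?thesis
    using rotated_cones_second_coord[OF q hecke_orbit_subset_rotated_cones[OF q]] by metis
qed

lemma mem_mat_image_Lambda_q:
  "p \<in> mat_image A (Lambda_q q) \<longleftrightarrow> (\<exists>g\<in>hecke_group q. p = (A ** g) *v vec2 1 0)"
  unfolding mat_image_def Lambda_q_def by (auto simp flip: matrix_vector_mul_assoc)

lemma mat_image_Lambda_q_uminus:
  assumes "p \<in> mat_image A (Lambda_q q)"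
  shows "- p \<in> mat_image A (Lambda_q q)"
proof -
  obtain g where g: "g \<in> hecke_group q" "p = (A ** g) *v vec2 1 0"
    using assms mem_mat_image_Lambda_q by blast
  have "(A ** (g ** (S_mat ** S_mat))) *v vec2 1 0 = - p"
  proof -
    have "(S_mat ** S_mat) *v vec2 1 0 = - vec2 1 0"
      by (simp add: matrix_vector_mul_assoc[symmetric] S_mat_mult_vec S_map_def uminus_vec2)
    then show ?thesis using g by (simp add: matrix_vector_mul_assoc[symmetric] vec.neg)
  qed
  then show ?thesis
    using g hecke_group_mult hecke_group_generators mem_mat_image_Lambda_q by metis
qed

lemma cross2_mat_image_Lambda_q:
  assumes q: "2 \<le> q" and A: "det A = 1"
    and p: "p \<in> mat_image A (Lambda_q q)" and p': "p' \<in> mat_image A (Lambda_q q)"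
  shows "cross2 p p' = 0 \<or> 1 \<le> \<bar>cross2 p p'\<bar>"
proof -
  obtain g h where g: "g \<in> hecke_group q" "p = A *v (g *v vec2 1 0)"
    and h: "h \<in> hecke_group q" "p' = A *v (h *v vec2 1 0)"
    using p p' by (auto simp: mem_mat_image_Lambda_q matrix_vector_mul_assoc)
  then show ?thesis using hecke_orbit_cross2[OF q g(1) h(1)] A by (simp add: cross2_matrix_vector_mult)
qed

section \<open>Horocyclic stabilisers of \<open>A\<Lambda>\<^sub>q\<close>\<close>

lemma mat_image_Lambda_q_conj:
  assumes C: "C \<in> hecke_group q" and HA: "H ** A = A ** C"
  shows "mat_image H (mat_image A (Lambda_q q)) = mat_image A (Lambda_q q)"
proof -
  let ?e1 = "vec2 1 0"
  have shift: "H *v ((A ** g) *v ?e1) = (A ** (C ** g)) *v ?e1" for g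
    by (simp add: matrix_vector_mul_assoc matrix_mul_assoc HA)
  have unshift: "(A ** g) *v ?e1 = H *v ((A ** (adj2 C ** g)) *v ?e1)" for g
  proof -
    have "C ** (adj2 C ** g) = g"
      by (simp add: matrix_mul_assoc adj2_inverse(2)[OF hecke_group_det[OF C]])
    then show ?thesis by (simp only: shift)
  qed
  show ?thesis
  proof (intro set_eqI iffI)
    fix p assume "p \<in> mat_image H (mat_image A (Lambda_q q))"
    then obtain g where "g \<in> hecke_group q" "p = H *v ((A ** g) *v ?e1)"
      unfolding mat_image_def[of H] by (auto simp: mem_mat_image_Lambda_q)
    then show "p \<in> mat_image A (Lambda_q q)"
      unfolding shift mem_mat_image_Lambda_q using C hecke_group_mult by blast
  next
    fix p assume "p \<in> mat_image A (Lambda_q q)"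
    then obtain g where g: "g \<in> hecke_group q" "p = (A ** g) *v ?e1"
      unfolding mem_mat_image_Lambda_q by blast
    have "(A ** (adj2 C ** g)) *v ?e1 \<in> mat_image A (Lambda_q q)"
      unfolding mem_mat_image_Lambda_q using g(1) C hecke_group_adj2 hecke_group_mult by blast
    moreover have "p = H *v ((A ** (adj2 C ** g)) *v ?e1)"
      using g(2) unshift[of g] by simp
    ultimately show "p \<in> mat_image H (mat_image A (Lambda_q q))"
      unfolding mat_image_def[of H] by (rule rev_image_eqI)
  qed
qed

lemma h_mat_conj_translation:
  assumes B: "det B = 1" "B *v vec2 1 0 = vec2 0 a"
  shows "h_mat (l * a\<^sup>2) ** B = B ** mat2 1 l 0 1"
proof -
  have B1: "B$1$1 = 0" "B$2$1 = a"
    using B(2) matrix_vector_mult_e1[of B] by simp_all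
  then have "a * B$1$2 = -1" using B(1) by (simp add: det_2 mult.commute)
  moreover have "a * (a * (l * B$1$2)) = a * l * (a * B$1$2)"
    by (simp add: algebra_simps)
  ultimately have "a * (a * (l * B$1$2)) = - (a * l)"
    by simp
  then show ?thesis
    by (subst (1 2) mat2_eta[of B])
       (simp add: B1 h_mat_def mat2_mult_mat2 power2_eq_square algebra_simps)
qed

lemma vertical_imp_h_mat_stable:
  assumes A: "det A = 1" and v: "vec2 0 a \<in> mat_image A (Lambda_q q)"
  shows "mat_image (h_mat (lambda_q q * a\<^sup>2)) (mat_image A (Lambda_q q)) = mat_image A (Lambda_q q)"
proof -
  obtain g where g: "g \<in> hecke_group q" "vec2 0 a = (A ** g) *v vec2 1 0"
    using v unfolding mem_mat_image_Lambda_q by blast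
  have "det (A ** g) = 1" using A hecke_group_det[OF g(1)] by (simp add: det_mul)
  then have "h_mat (lambda_q q * a\<^sup>2) ** (A ** g) = A ** g ** T_mat q"
    unfolding T_mat_def using g(2)[symmetric] by (rule h_mat_conj_translation)
  then have conj: "h_mat (lambda_q q * a\<^sup>2) ** A ** g = A ** g ** T_mat q"
    by (simp add: matrix_mul_assoc)
  have "h_mat (lambda_q q * a\<^sup>2) ** A = h_mat (lambda_q q * a\<^sup>2) ** A ** g ** adj2 g"
    by (simp add: adj2_inverse(2)[OF hecke_group_det[OF g(1)]] flip: matrix_mul_assoc)
  also have "\<dots> = A ** (g ** T_mat q ** adj2 g)"
    by (simp add: conj matrix_mul_assoc)
  finally have "h_mat (lambda_q q * a\<^sup>2) ** A = A ** (g ** T_mat q ** adj2 g)" .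
  moreover have "g ** T_mat q ** adj2 g \<in> hecke_group q"
    using g(1) hecke_group_generators(3) hecke_group_adj2 by (intro hecke_group_mult)
  ultimately show ?thesis by (intro mat_image_Lambda_q_conj)
qed

lemma h_mat_stable_imp_strip_disjoint:
  assumes q: "2 \<le> q" and A: "det A = 1" and s: "0 < s"
    and stable: "mat_image (h_mat s) (mat_image A (Lambda_q q)) = mat_image A (Lambda_q q)"
  shows "mat_image A (Lambda_q q) \<inter> strip (1/(s+1)) = {}"
proof (rule ccontr)
  assume "mat_image A (Lambda_q q) \<inter> strip (1/(s+1)) \<noteq> {}"
  then obtain p where p: "p \<in> mat_image A (Lambda_q q)" "0 < p$1" "p$1 \<le> 1/(s+1)"
    by (auto simp: strip_def)
  have "h_mat s *v p \<in> mat_image A (Lambda_q q)"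
    using p(1) stable unfolding mat_image_def by blast
  then have "cross2 p (h_mat s *v p) = 0 \<or> 1 \<le> \<bar>cross2 p (h_mat s *v p)\<bar>"
    using cross2_mat_image_Lambda_q[OF q A p(1)] by blast
  then have "1 \<le> s * (p$1)\<^sup>2"
    using s p(2) by (simp add: cross2_h_mat)
  moreover have "s * (p$1)\<^sup>2 \<le> s * (1/(s+1))\<^sup>2"
    using p s by (intro mult_left_mono power_mono) auto
  moreover have "s * (1/(s+1))\<^sup>2 < 1"
    using s by (simp add: power2_eq_square field_simps) (simp add: add_pos_nonneg)
  ultimately show False by linarith
qed

section \<open>Finding a vertical vector\<close>

text \<open>The (1,1) entry of \<open>M T\<^sub>q\<^sup>k S\<close> is \<open>k \<lambda>\<^sub>q M\<^sub>1\<^sub>1 + M\<^sub>1\<^sub>2\<close>; take for \<open>k\<close> the integer nearest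
  to \<open>- M\<^sub>1\<^sub>2 / (\<lambda>\<^sub>q M\<^sub>1\<^sub>1)\<close>.\<close>

lemma hecke_euclid_step:
  fixes M :: "real^2^2"
  assumes l: "0 < lambda_q q" and x: "M$1$1 \<noteq> 0"
  shows "\<exists>k. \<bar>(M ** (hecke_translation q k ** S_mat))$1$1\<bar> \<le> lambda_q q / 2 * \<bar>M$1$1\<bar>"
proof -
  define r where "r = - M$1$2 / (lambda_q q * M$1$1)"
  define k where "k = \<lfloor>r + 1/2\<rfloor>"
  have "(M ** (hecke_translation q k ** S_mat))$1$1 = lambda_q q * M$1$1 * (of_int k - r)"
    using l x
    by (subst mat2_eta[of M])
       (simp add: hecke_translation_def S_mat_def mat2_mult_mat2 r_def field_simps)
  then have "\<bar>(M ** (hecke_translation q k ** S_mat))$1$1\<bar> = lambda_q q * \<bar>M$1$1\<bar> * \<bar>of_int k - r\<bar>"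
    using l by (simp add: abs_mult)
  also have "\<dots> \<le> lambda_q q * \<bar>M$1$1\<bar> * (1/2)"
  proof (rule mult_left_mono)
    show "\<bar>of_int k - r\<bar> \<le> 1/2" unfolding k_def by linarith
  qed (use l in simp)
  finally show ?thesis by auto
qed

lemma hecke_euclid:
  fixes A :: "real^2^2"
  assumes l: "0 < lambda_q q" and nz: "\<And>g. g \<in> hecke_group q \<Longrightarrow> (A ** g)$1$1 \<noteq> 0"
  shows "\<exists>g\<in>hecke_group q. \<bar>(A ** g)$1$1\<bar> \<le> (lambda_q q / 2)^n * \<bar>A$1$1\<bar>"
proof (induction n)
  case 0
  show ?case by (intro bexI[OF _ hecke_group.hg_id]) simp
next
  case (Suc n)
  then obtain g where g: "g \<in> hecke_group q" "\<bar>(A ** g)$1$1\<bar> \<le> (lambda_q q / 2)^n * \<bar>A$1$1\<bar>"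
    by blast
  obtain k where k: "\<bar>(A ** g ** (hecke_translation q k ** S_mat))$1$1\<bar> \<le> lambda_q q / 2 * \<bar>(A ** g)$1$1\<bar>"
    using hecke_euclid_step[OF l nz[OF g(1)]] by blast
  have "g ** (hecke_translation q k ** S_mat) \<in> hecke_group q"
    by (intro hecke_group_mult g(1) hecke_translation_mem hecke_group_generators(1))
  moreover have "\<bar>(A ** (g ** (hecke_translation q k ** S_mat)))$1$1\<bar> \<le> (lambda_q q / 2)^Suc n * \<bar>A$1$1\<bar>"
  proof -
    have "lambda_q q / 2 * \<bar>(A ** g)$1$1\<bar> \<le> lambda_q q / 2 * ((lambda_q q / 2)^n * \<bar>A$1$1\<bar>)"
      using g(2) l by (intro mult_left_mono) auto
    then have "\<bar>(A ** g ** (hecke_translation q k ** S_mat))$1$1\<bar> \<le> (lambda_q q / 2)^Suc n * \<bar>A$1$1\<bar>"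
      using k by (simp only: power_Suc mult.assoc)
    then show ?thesis by (simp only: matrix_mul_assoc)
  qed
  ultimately show ?case by blast
qed

lemma strip_disjoint_imp_vertical:
  assumes q: "3 \<le> q" and A: "det A = 1" and \<tau>: "0 < \<tau>"
    and disjoint: "mat_image A (Lambda_q q) \<inter> strip \<tau> = {}"
  shows "\<exists>y. y \<noteq> 0 \<and> vec2 0 y \<in> mat_image A (Lambda_q q)"
proof (rule ccontr)
  assume no_vertical: "\<not> ?thesis"
  have nz: "(A ** g)$1$1 \<noteq> 0" if g: "g \<in> hecke_group q" for g
  proof
    assume 0: "(A ** g)$1$1 = 0"
    have "det (A ** g) = 1" using A hecke_group_det[OF g] by (simp add: det_mul)
    then have "(A ** g)$2$1 \<noteq> 0" using 0 by (auto simp: det_2)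
    moreover have "vec2 0 ((A ** g)$2$1) \<in> mat_image A (Lambda_q q)"
    proof -
      have "vec2 0 ((A ** g)$2$1) = (A ** g) *v vec2 1 0"
        using 0 by (simp add: vec_eq_iff forall_2)
      then show ?thesis using g unfolding mem_mat_image_Lambda_q by blast
    qed
    ultimately show False using no_vertical by blast
  qed
  have l: "0 < lambda_q q" "lambda_q q / 2 < 1"
    using lambda_q_pos[OF q] lambda_q_less_2[of q] q by simp_all
  have "0 < \<tau> / \<bar>A$1$1\<bar>" using \<tau> nz[OF hecke_group.hg_id] by simp
  then obtain n where "(lambda_q q / 2)^n < \<tau> / \<bar>A$1$1\<bar>"
    using real_arch_pow_inv[OF _ l(2)] by blast
  moreover obtain g where g: "g \<in> hecke_group q" "\<bar>(A ** g)$1$1\<bar> \<le> (lambda_q q / 2)^n * \<bar>A$1$1\<bar>"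
    using hecke_euclid[OF l(1) nz] by blast
  ultimately have small: "\<bar>(A ** g)$1$1\<bar> < \<tau>"
    using nz[OF hecke_group.hg_id] by (simp add: pos_less_divide_eq)
  define p where "p = (A ** g) *v vec2 1 0"
  have p: "p \<in> mat_image A (Lambda_q q)" "- p \<in> mat_image A (Lambda_q q)"
    using g(1) mem_mat_image_Lambda_q mat_image_Lambda_q_uminus p_def by blast+
  have "p \<in> strip \<tau> \<or> - p \<in> strip \<tau>"
    using small nz[OF g(1)] by (auto simp: strip_def p_def)
  then show False using disjoint p by blast
qed

lemma h_mat_stable_ge:
  assumes q: "2 \<le> q" and A: "det A = 1" and v: "vec2 0 a \<in> mat_image A (Lambda_q q)"
    and s: "0 < s"
    and stable: "mat_image (h_mat s) (mat_image A (Lambda_q q)) = mat_image A (Lambda_q q)"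
  shows "lambda_q q * a\<^sup>2 \<le> s"
proof (rule ccontr)
  assume less: "\<not> ?thesis"
  let ?L = "mat_image A (Lambda_q q)"
  obtain g where g: "g \<in> hecke_group q" "vec2 0 a = (A ** g) *v vec2 1 0"
    using v unfolding mem_mat_image_Lambda_q by blast
  define B where "B = A ** g"
  have B1: "B$1$1 = 0" "B$2$1 = a"
    using g(2)[symmetric] matrix_vector_mult_e1[of B] by (simp_all add: B_def)
  have "det B = 1" using A hecke_group_det[OF g(1)] by (simp add: B_def det_mul)
  then have ab: "a * B$1$2 = -1" using B1 by (simp add: det_2 mult.commute)
  define w where "w = (B ** S_mat) *v vec2 1 0"
  define w' where "w' = (B ** (T_mat q ** S_mat)) *v vec2 1 0"
  have "T_mat q ** S_mat = mat2 (lambda_q q) (-1) 1 0"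
    by (simp add: T_mat_def S_mat_def mat2_mult_mat2)
  then have w: "w$1 = B$1$2" "w$2 = B$2$2" and w': "w'$1 = B$1$2" "w'$2 = a * lambda_q q + B$2$2"
    by (simp_all add: w_def w'_def S_mat_def matrix_mult_mat2_nth B1)
  have gS: "g ** S_mat \<in> hecke_group q" and gTS: "g ** (T_mat q ** S_mat) \<in> hecke_group q"
    by (intro hecke_group_mult g(1) hecke_group_generators(1,3))+
  have "w \<in> ?L"
    unfolding w_def B_def mem_mat_image_Lambda_q
    by (rule bexI[OF _ gS]) (simp add: matrix_mul_assoc)
  moreover have "w' \<in> ?L"
    unfolding w'_def B_def mem_mat_image_Lambda_q
    by (rule bexI[OF _ gTS]) (simp add: matrix_mul_assoc)
  moreover have "h_mat s *v w \<in> ?L"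
    using \<open>w \<in> ?L\<close> stable unfolding mat_image_def by blast
  ultimately have c1: "cross2 w (h_mat s *v w) = 0 \<or> 1 \<le> \<bar>cross2 w (h_mat s *v w)\<bar>"
    and c2: "cross2 (h_mat s *v w) w' = 0 \<or> 1 \<le> \<bar>cross2 (h_mat s *v w) w'\<bar>"
    using cross2_mat_image_Lambda_q[OF q A] by blast+
  have "cross2 (h_mat s *v w) w' = s * (B$1$2)\<^sup>2 + lambda_q q * (a * B$1$2)"
    by (simp add: cross2_def h_mat_mult_vec w w' power2_eq_square algebra_simps)
  then have area: "cross2 (h_mat s *v w) w' = s * (B$1$2)\<^sup>2 - lambda_q q"
    using ab by simp
  have "s * (B$1$2)\<^sup>2 * a\<^sup>2 = s * (a * B$1$2)\<^sup>2"
    by (simp add: power_mult_distrib mult_ac)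
  also have "\<dots> = s" using ab by simp
  finally have "s * (B$1$2)\<^sup>2 * a\<^sup>2 < lambda_q q * a\<^sup>2"
    using less by linarith
  then have "s * (B$1$2)\<^sup>2 < lambda_q q"
    using ab by (simp add: mult_less_cancel_right)
  moreover have "1 \<le> s * (B$1$2)\<^sup>2"
    using c1 s ab w(1) by (auto simp: cross2_h_mat)
  ultimately show False
    using c2 area lambda_q_less_2[of q] q by auto
qed

theorem mainTheorem6:
  fixes q :: nat and A :: "real^2^2"
  assumes "q \<ge> 3" and "det A = 1"
  shows "((\<exists>y. y \<noteq> 0 \<and> vec2 0 y \<in> mat_image A (Lambda_q q))
            \<longleftrightarrow> (\<exists>s0>0. mat_image (h_mat s0) (mat_image A (Lambda_q q)) = mat_image A (Lambda_q q)))
       \<and> ((\<exists>s0>0. mat_image (h_mat s0) (mat_image A (Lambda_q q)) = mat_image A (Lambda_q q))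
            \<longleftrightarrow> (\<exists>\<tau>0>0. mat_image A (Lambda_q q) \<inter> strip \<tau>0 = {}))
       \<and> (\<forall>a>0. (vec2 0 a \<in> mat_image A (Lambda_q q) \<or> vec2 0 (-a) \<in> mat_image A (Lambda_q q))
            \<longrightarrow> (let P = {s0. s0 > 0 \<and> mat_image (h_mat s0) (mat_image A (Lambda_q q)) = mat_image A (Lambda_q q)}
                 in lambda_q q * a^2 \<in> P \<and> (\<forall>s\<in>P. lambda_q q * a^2 \<le> s)))"
proof -
  note q = assms(1) and A = assms(2)
  define L where "L = mat_image A (Lambda_q q)"
  have stable: "0 < lambda_q q * y\<^sup>2 \<and> mat_image (h_mat (lambda_q q * y\<^sup>2)) L = L"
    if "y \<noteq> 0" "vec2 0 y \<in> L" for y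
    using that vertical_imp_h_mat_stable[OF A, of y q] lambda_q_pos[OF q] by (simp add: L_def)
  have strip: "0 < 1/(s+1) \<and> L \<inter> strip (1/(s+1)) = {}"
    if "0 < s" "mat_image (h_mat s) L = L" for s
    using that h_mat_stable_imp_strip_disjoint[of q A s] q A by (simp add: L_def)
  have vertical: "\<exists>y. y \<noteq> 0 \<and> vec2 0 y \<in> L" if "0 < \<tau>" "L \<inter> strip \<tau> = {}" for \<tau>
    using that strip_disjoint_imp_vertical[OF q A] by (simp add: L_def)
  have least: "lambda_q q * a\<^sup>2 \<le> s"
    if "vec2 0 a \<in> L" "0 < s" "mat_image (h_mat s) L = L" for a s
    using that h_mat_stable_ge[of q A a s] q A by (simp add: L_def)
  have upward: "vec2 0 a \<in> L" if "vec2 0 a \<in> L \<or> vec2 0 (-a) \<in> L" for a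
    using that mat_image_Lambda_q_uminus[of "vec2 0 (-a)"] by (auto simp: L_def uminus_vec2)
  have "(\<exists>y. y \<noteq> 0 \<and> vec2 0 y \<in> L) \<Longrightarrow> (\<exists>s0>0. mat_image (h_mat s0) L = L)"
    using stable by blast
  moreover have "(\<exists>s0>0. mat_image (h_mat s0) L = L) \<Longrightarrow> (\<exists>\<tau>0>0. L \<inter> strip \<tau>0 = {})"
    using strip by blast
  moreover have "(\<exists>\<tau>0>0. L \<inter> strip \<tau>0 = {}) \<Longrightarrow> (\<exists>y. y \<noteq> 0 \<and> vec2 0 y \<in> L)"
    using vertical by blast
  moreover have "lambda_q q * a\<^sup>2 \<in> {s0. s0 > 0 \<and> mat_image (h_mat s0) L = L}
      \<and> (\<forall>s\<in>{s0. s0 > 0 \<and> mat_image (h_mat s0) L = L}. lambda_q q * a\<^sup>2 \<le> s)"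
    if "0 < a" "vec2 0 a \<in> L \<or> vec2 0 (-a) \<in> L" for a
    using that stable[of a] least[of a] upward[of a] by auto
  ultimately show ?thesis
    unfolding L_def[symmetric] Let_def by blast
qed

end
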